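(* Let $|\psi\rangle=\sum_{v,c,w,d}a_{vc,wd}|v\rangle_A|c,w\rangle_B|d\rangle_C$ be a state on $\mathbb{C}^R\otimes(\mathbb{C}^\kappa\otimes\mathbb{C}^R)\otimes\mathbb{C}^\kappa$ (registers 1,2,3,4 with register 1 $=A$, registers 2,3 $=B$, register 4 $=C$), and let $\rho_{B,C}=\mathrm{Tr}_A(|\psi\rangle\langle\psi|)$. Suppose $\mathsf{MatchCheck}$ succeeds on $|\psi\rangle$ with probability $1-\epsilon$ and $\rho_{B,C}$ is separable across $B|C$. Then there is a state $|\phi\rangle$ that is quasirigid after applying $\mathrm{CNOT}_{1,3}\mathrm{CNOT}_{2,4}$ such that $|\langle\phi|\psi\rangle|^2\ge 1-(\kappa+1)\epsilon$.
   Context: $\mathsf{MatchCheck}$ measures all four registers in the computational basis, obtaining $(v,c,w,d)$, and accepts iff $(v,c)=(w,d)$; its success probability on $|\psi\rangle$ is $\sum_{v,c}|a_{vc,vc}|^2$. $\mathrm{CNOT}_{i,j}$ maps $|x\rangle_i|y\rangle_j\mapsto|x\rangle_i|y\oplus x\rangle_j$, with $\oplus$ addition modulo the register dimension (registers 1 and 3 have dimension $R$, registers 2 and 4 dimension $\kappa$). A bipartite state in $\mathbb{C}^R\otimes\mathbb{C}^\kappa$ is quasirigid if it has the form $\sum_{v\in[R]}\alpha_v|v\rangle|c_v\rangle$ for complex $\alpha_v$ and indices $c_v\in[\kappa]$, and rigid if moreover all $\alpha_v=1/\sqrt R$. A four-register state is "quasirigid after applying $\mathrm{CNOT}_{1,3}\mathrm{CNOT}_{2,4}$"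 if it has the form $\sum_v\alpha_v|v\rangle|c_v\rangle|v\rangle|c_v\rangle$, i.e. applying these CNOTs yields a quasirigid state on registers 1,2 tensored with $|0\rangle|0\rangle$ on registers 3,4. *)

theory Defs
  imports Complex_Main
begin

text \<open>A four-register state is a function psi v c w d (amplitude a_{vc,wd}),
  with v, w < R and c, d < kappa.\<close>

definition is_state4 :: "nat \<Rightarrow> nat \<Rightarrow> (nat \<Rightarrow> nat \<Rightarrow> nat \<Rightarrow> nat \<Rightarrow> complex) \<Rightarrow> bool" where
  "is_state4 R \<kappa> psi \<longleftrightarrow>
     (\<Sum>v<R. \<Sum>c<\<kappa>. \<Sum>w<R. \<Sum>d<\<kappa>. (cmod (psi v c w d))\<^sup>2) = 1"

definition inner4 :: "nat \<Rightarrow> nat \<Rightarrow> (nat \<Rightarrow> nat \<Rightarrow> nat \<Rightarrow> nat \<Rightarrow> complex)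
    \<Rightarrow> (nat \<Rightarrow> nat \<Rightarrow> nat \<Rightarrow> nat \<Rightarrow> complex) \<Rightarrow> complex" where
  "inner4 R \<kappa> phi psi =
     (\<Sum>v<R. \<Sum>c<\<kappa>. \<Sum>w<R. \<Sum>d<\<kappa>. cnj (phi v c w d) * psi v c w d)"

definition matchcheck_prob :: "nat \<Rightarrow> nat \<Rightarrow> (nat \<Rightarrow> nat \<Rightarrow> nat \<Rightarrow> nat \<Rightarrow> complex) \<Rightarrow> real" where
  "matchcheck_prob R \<kappa> psi = (\<Sum>v<R. \<Sum>c<\<kappa>. (cmod (psi v c v c))\<^sup>2)"

text \<open>Reduced state on B (registers 2,3) and C (register 4): trace out register 1 (A).
  Row index ((c,w),d), column index ((c',w'),d').\<close>
definition rhoBC :: "nat \<Rightarrow> (nat \<Rightarrow> nat \<Rightarrow> nat \<Rightarrow> nat \<Rightarrow> complex)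
    \<Rightarrow> (nat \<times> nat) \<times> nat \<Rightarrow> (nat \<times> nat) \<times> nat \<Rightarrow> complex" where
  "rhoBC R psi = (\<lambda>((c,w),d) ((c',w'),d'). \<Sum>v<R. psi v c w d * cnj (psi v c' w' d'))"

definition density_on :: "'a set \<Rightarrow> ('a \<Rightarrow> 'a \<Rightarrow> complex) \<Rightarrow> bool" where
  "density_on S M \<longleftrightarrow>
     (\<forall>x :: 'a \<Rightarrow> complex. (\<Sum>i\<in>S. \<Sum>j\<in>S. cnj (x i) * M i j * x j) \<in> \<real> \<and>
        Re (\<Sum>i\<in>S. \<Sum>j\<in>S. cnj (x i) * M i j * x j) \<ge> 0) \<and>
     (\<Sum>i\<in>S. M i i) = 1"

definition separable_on :: "'b set \<Rightarrow> 'c set \<Rightarrow> ('b \<times> 'c \<Rightarrow> 'b \<times> 'c \<Rightarrow> complex) \<Rightarrow> bool" where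
  "separable_on SB SC \<rho> \<longleftrightarrow>
     (\<exists>(n::nat) (p::nat \<Rightarrow> real) \<sigma> \<tau>.
        (\<forall>i<n. p i \<ge> 0) \<and> (\<Sum>i<n. p i) = 1 \<and>
        (\<forall>i<n. density_on SB (\<sigma> i) \<and> density_on SC (\<tau> i)) \<and>
        (\<forall>b\<in>SB. \<forall>c\<in>SC. \<forall>b'\<in>SB. \<forall>c'\<in>SC.
            \<rho> (b,c) (b',c') = (\<Sum>i<n. complex_of_real (p i) * \<sigma> i b b' * \<tau> i c c')))"

definition quasirigid_after_cnot :: "nat \<Rightarrow> nat \<Rightarrow> (nat \<Rightarrow> nat \<Rightarrow> nat \<Rightarrow> nat \<Rightarrow> complex) \<Rightarrow> bool" where
  "quasirigid_after_cnot R \<kappa> phi \<longleftrightarrow>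
     (\<exists>(\<alpha>::nat \<Rightarrow> complex) (cv::nat \<Rightarrow> nat). (\<forall>v<R. cv v < \<kappa>) \<and>
        (\<forall>v<R. \<forall>c<\<kappa>. \<forall>w<R. \<forall>d<\<kappa>.
           phi v c w d = (if c = cv v \<and> w = v \<and> d = cv v then \<alpha> v else 0)))"

end

theory Submission
  imports Defs
begin

(*
  Let eps be the total weight of the outcomes (v, c, w, d) with (v, c) <> (w, d), so that
  MatchCheck succeeds with probability 1 - eps. A separable rho on B|C satisfies
  |rho_(b,d),(b',d')| <= (rho_(b,d'),(b,d') + rho_(b',d),(b',d)) / 2, by a 2x2 Cauchy-Schwarz
  bound in each product term. For b = (c, w), b' = (c', w), d = c, d' = c' with c <> c', the
  diagonal entries on the right consist of mismatched amplitudes only, while the entry on the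
  left contains psi(w,c,w,c) * conj psi(w,c',w,c'). Hence, if c_w maximises |psi(w,c,w,c)|,
  the other matched amplitudes at w carry at most (kappa - 1) / 2 times the mismatch weight at
  w, and sum_w |psi(w,c_w,w,c_w)|^2 >= 1 - (kappa + 1) eps / 2. Normalising the vector
  (psi(v,c_v,v,c_v))_v gives a quasirigid state whose squared overlap with psi is this sum.
*)

definition psd_on :: "'a set \<Rightarrow> ('a \<Rightarrow> 'a \<Rightarrow> complex) \<Rightarrow> bool" where
  "psd_on S M \<longleftrightarrow>
     (\<forall>x :: 'a \<Rightarrow> complex. (\<Sum>i\<in>S. \<Sum>j\<in>S. cnj (x i) * M i j * x j) \<in> \<real> \<and>
        Re (\<Sum>i\<in>S. \<Sum>j\<in>S. cnj (x i) * M i j * x j) \<ge> 0)"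

lemma density_on_imp_psd_on: "density_on S M \<Longrightarrow> psd_on S M"
  unfolding density_on_def psd_on_def by blast

lemma quadratic_form_restrict:
  assumes "finite S" "T \<subseteq> S" "\<And>k. k \<in> S - T \<Longrightarrow> x k = 0"
  shows "(\<Sum>k\<in>S. \<Sum>l\<in>S. cnj (x k) * M k l * x l) = (\<Sum>k\<in>T. \<Sum>l\<in>T. cnj (x k) * M k l * x l)"
proof -
  have "(\<Sum>l\<in>S. cnj (x k) * M k l * x l) = (\<Sum>l\<in>T. cnj (x k) * M k l * x l)" for k
    using assms by (intro sum.mono_neutral_right) auto
  then have "(\<Sum>k\<in>S. \<Sum>l\<in>S. cnj (x k) * M k l * x l) = (\<Sum>k\<in>S. \<Sum>l\<in>T. cnj (x k) * M k l * x l)"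
    by simp
  also have "\<dots> = (\<Sum>k\<in>T. \<Sum>l\<in>T. cnj (x k) * M k l * x l)"
    using assms by (intro sum.mono_neutral_right) auto
  finally show ?thesis .
qed

lemma psd_on_two_point:
  fixes t s :: complex
  assumes "psd_on S M" "finite S" "i \<in> S" "j \<in> S" "i \<noteq> j"
  shows "cnj t * M i i * t + cnj t * M i j * s + cnj s * M j i * t + cnj s * M j j * s \<in> \<real>"
    and "Re (cnj t * M i i * t + cnj t * M i j * s + cnj s * M j i * t + cnj s * M j j * s) \<ge> 0"
proof -
  let ?Q = "cnj t * M i i * t + cnj t * M i j * s + cnj s * M j i * t + cnj s * M j j * s"
  define x where "x k = (if k = i then t else if k = j then s else 0)" for k
  have "(\<Sum>k\<in>S. \<Sum>l\<in>S. cnj (x k) * M k l * x l) = (\<Sum>k\<in>{i, j}. \<Sum>l\<in>{i, j}. cnj (x k) * M k l * x l)"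
    using assms(2-4) by (intro quadratic_form_restrict) (auto simp: x_def)
  also have "\<dots> = ?Q"
    using assms(5) by (simp add: x_def add.assoc)
  finally show "?Q \<in> \<real>" "Re ?Q \<ge> 0"
    using assms(1) unfolding psd_on_def by (metis (no_types))+
qed

lemma psd_on_diag:
  assumes "psd_on S M" "finite S" "i \<in> S"
  shows "M i i \<in> \<real>" "Re (M i i) \<ge> 0"
proof -
  define x where "x k = (if k = i then 1 else 0 :: complex)" for k
  have "(\<Sum>k\<in>S. \<Sum>l\<in>S. cnj (x k) * M k l * x l) = M i i"
    using assms(2,3) by (subst quadratic_form_restrict[where T = "{i}"]) (auto simp: x_def)
  then show "M i i \<in> \<real>" "Re (M i i) \<ge> 0"
    using assms(1) unfolding psd_on_def by (metis (no_types))+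
qed

lemma psd_on_hermitian:
  assumes "psd_on S M" "finite S" "i \<in> S" "j \<in> S"
  shows "M j i = cnj (M i j)"
proof (cases "i = j")
  case True
  then show ?thesis using psd_on_diag(1)[OF assms(1-3)] by (simp add: Reals_cnj_iff)
next
  case False
  have a: "Im (M i i) = 0" and b: "Im (M j j) = 0"
    using psd_on_diag(1)[OF assms(1,2)] assms(3,4) by (simp_all add: complex_is_Real_iff)
  have "Im (M i j + M j i) = 0"
    using psd_on_two_point(1)[OF assms False, of 1 1] a b by (simp add: complex_is_Real_iff)
  moreover have "Re (M i j - M j i) = 0"
    using psd_on_two_point(1)[OF assms False, of 1 \<i>] a b by (simp add: complex_is_Real_iff)
  ultimately show ?thesis by (simp add: complex_eq_iff)
qed

lemma psd_on_cauchy_schwarz: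
  assumes "psd_on S M" "finite S" "i \<in> S" "j \<in> S"
  shows "(cmod (M i j))\<^sup>2 \<le> Re (M i i) * Re (M j j)"
proof (cases "i = j")
  case True
  then show ?thesis
    using psd_on_diag(1)[OF assms(1-3)] by (auto simp: power2_eq_square elim: Reals_cases)
next
  case False
  define a b z where "a = Re (M i i)" and "b = Re (M j j)" and "z = M i j"
  have Mii: "M i i = of_real a" and Mjj: "M j j = of_real b"
    using psd_on_diag(1)[OF assms(1,2)] assms(3,4) unfolding a_def b_def
    by (simp_all add: complex_is_Real_iff complex_eq_iff)
  have Mji: "M j i = cnj z"
    unfolding z_def by (rule psd_on_hermitian[OF assms])
  have "a \<ge> 0"
    unfolding a_def by (rule psd_on_diag(2)[OF assms(1-3)])
  \<comment> \<open>Test vectors that turn the form into a multiple of a b - |z|^2, resp. of -|z|^2 if a = 0.\<close>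
  then consider "a > 0" | "a = 0" by linarith
  then show ?thesis
  proof cases
    case 1
    have "0 \<le> Re (cnj (- z) * M i i * (- z) + cnj (- z) * M i j * of_real a
        + of_real a * M j i * (- z) + of_real a * M j j * of_real a)"
      using psd_on_two_point(2)[OF assms False, of "- z" "of_real a"] by simp
    also have "\<dots> = a * (a * b - (cmod z)\<^sup>2)"
      unfolding Mii Mjj Mji z_def[symmetric] cmod_power2 by (simp add: algebra_simps power2_eq_square)
    finally show ?thesis
      using 1 unfolding a_def b_def z_def by (simp add: zero_le_mult_iff)
  next
    case 2
    have "0 \<le> Re (of_real (b + 1) * M i i * of_real (b + 1) + of_real (b + 1) * M i j * (- cnj z)
        + (- z) * M j i * of_real (b + 1) + (- z) * M j j * (- cnj z))"
      using psd_on_two_point(2)[OF assms False, of "of_real (b + 1)" "- cnj z"] by simp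
    also have "\<dots> = - (b + 2) * (cmod z)\<^sup>2"
      unfolding Mii Mjj Mji z_def[symmetric] 2 cmod_power2 by (simp add: algebra_simps power2_eq_square)
    finally show ?thesis
      using 2 psd_on_diag(2)[OF assms(1,2,4)] unfolding a_def b_def z_def
      by (simp add: mult_nonneg_nonneg zero_le_mult_iff)
  qed
qed

lemma psd_on_tensor_entry_le:
  assumes "psd_on SB \<sigma>" "psd_on SC \<tau>" "finite SB" "finite SC"
    and "b \<in> SB" "b' \<in> SB" "d \<in> SC" "d' \<in> SC"
  shows "cmod (\<sigma> b b') * cmod (\<tau> d d')
    \<le> (Re (\<sigma> b b) * Re (\<tau> d' d') + Re (\<sigma> b' b') * Re (\<tau> d d)) / 2"
proof -
  have nonneg: "Re (\<sigma> b b) \<ge> 0" "Re (\<sigma> b' b') \<ge> 0" "Re (\<tau> d d) \<ge> 0" "Re (\<tau> d' d') \<ge> 0"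
    using psd_on_diag(2)[OF assms(1,3)] psd_on_diag(2)[OF assms(2,4)] assms(5-8) by simp_all
  have "cmod (\<sigma> b b') \<le> sqrt (Re (\<sigma> b b) * Re (\<sigma> b' b'))"
    using psd_on_cauchy_schwarz[OF assms(1,3,5,6)] by (rule real_le_rsqrt)
  moreover have "cmod (\<tau> d d') \<le> sqrt (Re (\<tau> d d) * Re (\<tau> d' d'))"
    using psd_on_cauchy_schwarz[OF assms(2,4,7,8)] by (rule real_le_rsqrt)
  ultimately have "cmod (\<sigma> b b') * cmod (\<tau> d d')
      \<le> sqrt (Re (\<sigma> b b) * Re (\<sigma> b' b')) * sqrt (Re (\<tau> d d) * Re (\<tau> d' d'))"
    using nonneg by (intro mult_mono) simp_all
  also have "\<dots> = sqrt ((Re (\<sigma> b b) * Re (\<tau> d' d')) * (Re (\<sigma> b' b') * Re (\<tau> d d)))"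
    by (simp only: real_sqrt_mult[symmetric] ac_simps)
  also have "\<dots> \<le> (Re (\<sigma> b b) * Re (\<tau> d' d') + Re (\<sigma> b' b') * Re (\<tau> d d)) / 2"
    using nonneg by (intro arith_geo_mean_sqrt) simp_all
  finally show ?thesis .
qed

lemma separable_on_offdiag_le:
  assumes "separable_on SB SC \<rho>" "finite SB" "finite SC"
    and "b \<in> SB" "b' \<in> SB" "d \<in> SC" "d' \<in> SC"
  shows "cmod (\<rho> (b, d) (b', d')) \<le> (Re (\<rho> (b, d') (b, d')) + Re (\<rho> (b', d) (b', d))) / 2"
proof -
  obtain n :: nat and p \<sigma> \<tau> where p: "\<forall>i<n. p i \<ge> 0"
    and dens: "\<forall>i<n. density_on SB (\<sigma> i) \<and> density_on SC (\<tau> i)"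
    and \<rho>: "\<forall>b\<in>SB. \<forall>c\<in>SC. \<forall>b'\<in>SB. \<forall>c'\<in>SC.
      \<rho> (b, c) (b', c') = (\<Sum>i<n. complex_of_real (p i) * \<sigma> i b b' * \<tau> i c c')"
    using assms(1) unfolding separable_on_def by blast
  have psd: "psd_on SB (\<sigma> i)" "psd_on SC (\<tau> i)" if "i < n" for i
    using dens that density_on_imp_psd_on by blast+
  have diag: "Re (\<rho> (x, e) (x, e)) = (\<Sum>i<n. p i * Re (\<sigma> i x x) * Re (\<tau> i e e))"
    if "x \<in> SB" "e \<in> SC" for x e
  proof -
    have re: "Re (complex_of_real (p i) * \<sigma> i x x * \<tau> i e e) = p i * Re (\<sigma> i x x) * Re (\<tau> i e e)"
      if "i < n" for i
      using psd_on_diag(1)[OF psd(1) assms(2)] psd_on_diag(1)[OF psd(2) assms(3)] that \<open>x \<in> SB\<close> \<open>e \<in> SC\<close>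
      by (simp add: complex_is_Real_iff)
    have "\<rho> (x, e) (x, e) = (\<Sum>i<n. complex_of_real (p i) * \<sigma> i x x * \<tau> i e e)"
      using \<rho> that by blast
    then have "Re (\<rho> (x, e) (x, e)) = (\<Sum>i<n. Re (complex_of_real (p i) * \<sigma> i x x * \<tau> i e e))"
      by (simp only: Re_sum)
    also have "\<dots> = (\<Sum>i<n. p i * Re (\<sigma> i x x) * Re (\<tau> i e e))"
      by (intro sum.cong refl re) simp
    finally show ?thesis .
  qed
  have "cmod (\<rho> (b, d) (b', d')) = cmod (\<Sum>i<n. complex_of_real (p i) * \<sigma> i b b' * \<tau> i d d')"
    using \<rho> assms(4-7) by simp
  also have "\<dots> \<le> (\<Sum>i<n. cmod (complex_of_real (p i) * \<sigma> i b b' * \<tau> i d d'))"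
    by (rule norm_sum)
  also have "\<dots> = (\<Sum>i<n. p i * (cmod (\<sigma> i b b') * cmod (\<tau> i d d')))"
    using p by (intro sum.cong) (auto simp: norm_mult)
  also have "\<dots> \<le> (\<Sum>i<n. p i * ((Re (\<sigma> i b b) * Re (\<tau> i d' d') + Re (\<sigma> i b' b') * Re (\<tau> i d d)) / 2))"
    using p psd_on_tensor_entry_le[OF psd assms(2,3,4,5,6,7)] by (intro sum_mono mult_left_mono) simp_all
  also have "\<dots> = (Re (\<rho> (b, d') (b, d')) + Re (\<rho> (b', d) (b', d))) / 2"
    using assms(4-7) by (simp add: diag flip: sum.distrib sum_divide_distrib) (simp add: algebra_simps)
  finally show ?thesis .
qed

lemma sum_if_eq_triple:
  fixes X :: "'a \<Rightarrow> 'b \<Rightarrow> 'c \<Rightarrow> 'd::comm_monoid_add"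
  assumes "finite A" "finite B" "finite C" "a \<in> A" "b \<in> B" "e \<in> C"
  shows "(\<Sum>x\<in>A. \<Sum>y\<in>B. \<Sum>z\<in>C. if x = a \<and> y = b \<and> z = e then X x y z else 0) = X a b e"
proof -
  have "(\<Sum>z\<in>C. if x = a \<and> y = b \<and> z = e then X x y z else 0) = (if x = a \<and> y = b then X x y e else 0)"
    for x y
    using assms by (cases "x = a \<and> y = b") auto
  moreover have "(\<Sum>y\<in>B. if x = a \<and> y = b then X x y e else 0) = (if x = a then X x b e else 0)" for x
    using assms by (cases "x = a") simp_all
  ultimately show ?thesis
    using assms by simp
qed

lemma ex_max_lessThan:
  fixes f :: "nat \<Rightarrow> 'a::linorder"
  assumes "n > 0"
  shows "\<exists>m<n. \<forall>k<n. f k \<le> f m"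
proof -
  obtain m where "m \<in> {..<n}" "f m = Max (f ` {..<n})"
    using Max_in[of "f ` {..<n}"] assms by fastforce
  then show ?thesis
    by (metis Max_ge finite_imageI finite_lessThan image_eqI lessThan_iff)
qed

lemma exists_unit_vector_inner_ge:
  fixes x :: "nat \<Rightarrow> complex"
  assumes "R \<ge> 1"
  shows "\<exists>\<alpha>. (\<Sum>v<R. (cmod (\<alpha> v))\<^sup>2) = 1 \<and> (\<Sum>v<R. (cmod (x v))\<^sup>2) \<le> (cmod (\<Sum>v<R. cnj (\<alpha> v) * x v))\<^sup>2"
proof -
  define G where "G = (\<Sum>v<R. (cmod (x v))\<^sup>2)"
  have "G \<ge> 0"
    unfolding G_def by (simp add: sum_nonneg)
  then consider "G = 0" | "G > 0" by linarith
  then show ?thesis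
  proof cases
    case 1
    define \<alpha> :: "nat \<Rightarrow> complex" where "\<alpha> v = (if v = 0 then 1 else 0)" for v
    have "(\<Sum>v<R. (cmod (\<alpha> v))\<^sup>2) = (\<Sum>v<R. if v = 0 then 1 else 0)"
      unfolding \<alpha>_def by (intro sum.cong) simp_all
    also have "\<dots> = 1"
      using assms by simp
    finally have "(\<Sum>v<R. (cmod (\<alpha> v))\<^sup>2) = 1" .
    moreover have "G \<le> (cmod (\<Sum>v<R. cnj (\<alpha> v) * x v))\<^sup>2"
      using 1 by simp
    ultimately show ?thesis
      unfolding G_def by blast
  next
    case 2
    define \<alpha> where "\<alpha> v = x v / of_real (sqrt G)" for v
    have "(\<Sum>v<R. (cmod (\<alpha> v))\<^sup>2) = G / (sqrt G)\<^sup>2"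
      unfolding \<alpha>_def G_def by (simp add: norm_divide power_divide sum_divide_distrib)
    also have "\<dots> = 1"
      using 2 by simp
    finally have unit: "(\<Sum>v<R. (cmod (\<alpha> v))\<^sup>2) = 1" .
    have "(\<Sum>v<R. cnj (\<alpha> v) * x v) = of_real (G / sqrt G)"
      unfolding \<alpha>_def G_def
      by (simp add: complex_norm_square[unfolded of_real_power, symmetric] mult.commute sum_divide_distrib)
    also have "G / sqrt G = sqrt G"
      using 2 by (simp add: real_div_sqrt)
    finally have overlap: "(cmod (\<Sum>v<R. cnj (\<alpha> v) * x v))\<^sup>2 = G"
      using 2 by simp
    show ?thesis
    proof (intro exI conjI)
      show "(\<Sum>v<R. (cmod (\<alpha> v))\<^sup>2) = 1"
        by (rule unit)
      show "(\<Sum>v<R. (cmod (x v))\<^sup>2) \<le> (cmod (\<Sum>v<R. cnj (\<alpha> v) * x v))\<^sup>2"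
        unfolding overlap G_def ..
    qed
  qed
qed

definition mismatch_weight :: "nat \<Rightarrow> nat \<Rightarrow> (nat \<Rightarrow> nat \<Rightarrow> nat \<Rightarrow> nat \<Rightarrow> complex) \<Rightarrow> nat \<Rightarrow> real" where
  "mismatch_weight R \<kappa> psi w =
     (\<Sum>v<R. \<Sum>c<\<kappa>. \<Sum>d<\<kappa>. if v = w \<and> c = d then 0 else (cmod (psi v c w d))\<^sup>2)"

lemma mismatch_weight_nonneg: "mismatch_weight R \<kappa> psi w \<ge> 0"
  unfolding mismatch_weight_def by (intro sum_nonneg) simp

lemma matchcheck_prob_add_mismatch_weight:
  assumes "is_state4 R \<kappa> psi"
  shows "matchcheck_prob R \<kappa> psi + (\<Sum>w<R. mismatch_weight R \<kappa> psi w) = 1"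
proof -
  define f where "f v c w d = (cmod (psi v c w d))\<^sup>2" for v c w d
  have match: "(\<Sum>v<R. \<Sum>c<\<kappa>. \<Sum>d<\<kappa>. if v = w \<and> c = d then f v c w d else 0) = (\<Sum>c<\<kappa>. f w c w c)"
    if "w < R" for w
  proof -
    have inner: "(\<Sum>d<\<kappa>. if v = w \<and> c = d then f v c w d else 0) = (if v = w then f w c w c else 0)"
      if "c < \<kappa>" for v c
      using that by (cases "v = w") simp_all
    have "(\<Sum>v<R. \<Sum>c<\<kappa>. \<Sum>d<\<kappa>. if v = w \<and> c = d then f v c w d else 0)
        = (\<Sum>v<R. if v = w then (\<Sum>c<\<kappa>. f w c w c) else 0)"
      by (intro sum.cong refl) (simp add: inner)
    then show ?thesis
      using \<open>w < R\<close> by simp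
  qed
  have if_add_complement: "(if P then x else 0) + (if P then 0 else x) = x" for P and x :: real
    by simp
  have "1 = (\<Sum>v<R. \<Sum>c<\<kappa>. \<Sum>w<R. \<Sum>d<\<kappa>. f v c w d)"
    using assms unfolding is_state4_def f_def by simp
  also have "\<dots> = (\<Sum>v<R. \<Sum>w<R. \<Sum>c<\<kappa>. \<Sum>d<\<kappa>. f v c w d)"
    by (intro sum.cong refl sum.swap)
  also have "\<dots> = (\<Sum>w<R. \<Sum>v<R. \<Sum>c<\<kappa>. \<Sum>d<\<kappa>. f v c w d)"
    by (rule sum.swap)
  also have "\<dots> = (\<Sum>w<R. \<Sum>v<R. \<Sum>c<\<kappa>. \<Sum>d<\<kappa>. if v = w \<and> c = d then f v c w d else 0)
      + (\<Sum>w<R. mismatch_weight R \<kappa> psi w)"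
    unfolding mismatch_weight_def f_def[symmetric] by (simp add: if_add_complement flip: sum.distrib)
  also have "\<dots> = matchcheck_prob R \<kappa> psi + (\<Sum>w<R. mismatch_weight R \<kappa> psi w)"
    unfolding matchcheck_prob_def f_def[symmetric] by (simp add: match)
  finally show ?thesis ..
qed

lemma matchcheck_prob_le_one:
  assumes "is_state4 R \<kappa> psi"
  shows "matchcheck_prob R \<kappa> psi \<le> 1"
proof -
  have "(\<Sum>w<R. mismatch_weight R \<kappa> psi w) \<ge> 0"
    by (intro sum_nonneg mismatch_weight_nonneg)
  then show ?thesis
    using matchcheck_prob_add_mismatch_weight[OF assms] by linarith
qed

lemma Re_rhoBC_diag: "Re (rhoBC R psi ((c, w), d) ((c, w), d)) = (\<Sum>v<R. (cmod (psi v c w d))\<^sup>2)"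
  unfolding rhoBC_def by (simp add: Re_sum complex_mult_cnj cmod_power2)

lemma mismatch_weight_ge_blocks:
  assumes "w < R" "c < \<kappa>" "c' < \<kappa>" "c \<noteq> c'"
  shows "(\<Sum>v<R. (cmod (psi v c w c'))\<^sup>2) + (\<Sum>v<R. (cmod (psi v c' w c))\<^sup>2)
      + (\<Sum>v\<in>{..<R} - {w}. (cmod (psi v c w c))\<^sup>2) + (\<Sum>v\<in>{..<R} - {w}. (cmod (psi v c' w c'))\<^sup>2)
    \<le> mismatch_weight R \<kappa> psi w"
proof -
  define g where "g v x y = (if v = w \<and> x = y then 0 else (cmod (psi v x w y))\<^sup>2)" for v x y
  have g_off: "(\<Sum>v<R. g v x y) = (\<Sum>v<R. (cmod (psi v x w y))\<^sup>2)" if "x \<noteq> y" for x y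
    using that unfolding g_def by simp
  have g_diag: "(\<Sum>v<R. g v x x) = (\<Sum>v\<in>{..<R} - {w}. (cmod (psi v x w x))\<^sup>2)" for x
    using \<open>w < R\<close> unfolding g_def by (simp add: sum.remove)
  have "g v c c' + g v c' c + g v c c + g v c' c' \<le> (\<Sum>x<\<kappa>. \<Sum>y<\<kappa>. g v x y)" for v
  proof -
    have "g v c c' + g v c' c + g v c c + g v c' c'
        = (\<Sum>(x, y)\<in>{(c, c'), (c', c), (c, c), (c', c')}. g v x y)"
      using \<open>c \<noteq> c'\<close> by simp
    also have "\<dots> \<le> (\<Sum>(x, y)\<in>{..<\<kappa>} \<times> {..<\<kappa>}. g v x y)"
      using assms(2,3) by (intro sum_mono2) (auto simp: g_def split: if_splits)
    finally show ?thesis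
      by (simp add: sum.cartesian_product)
  qed
  then have "(\<Sum>v<R. g v c c' + g v c' c + g v c c + g v c' c') \<le> mismatch_weight R \<kappa> psi w"
    unfolding mismatch_weight_def g_def[symmetric] by (rule sum_mono)
  then show ?thesis
    using \<open>c \<noteq> c'\<close> by (simp add: sum.distrib g_off g_diag)
qed

lemma diag_amplitude_mult_le_mismatch_weight:
  assumes sep: "separable_on ({..<\<kappa>} \<times> {..<R}) {..<\<kappa>} (rhoBC R psi)"
    and "w < R" "c < \<kappa>" "c' < \<kappa>" "c \<noteq> c'"
  shows "cmod (psi w c w c) * cmod (psi w c' w c') \<le> mismatch_weight R \<kappa> psi w / 2"
proof -
  \<comment> \<open>The product is the v = w term of an off-diagonal entry of rho_BC whose bounding
    diagonal entries contain only mismatched amplitudes.\<close>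
  define \<rho> where "\<rho> = rhoBC R psi ((c, w), c) ((c', w), c')"
  define rest where "rest = (\<Sum>v\<in>{..<R} - {w}. psi v c w c * cnj (psi v c' w c'))"
  have "\<rho> = psi w c w c * cnj (psi w c' w c') + rest"
    unfolding \<rho>_def rhoBC_def rest_def using \<open>w < R\<close> by (simp add: sum.remove)
  then have "cmod (psi w c w c) * cmod (psi w c' w c') = cmod (\<rho> - rest)"
    by (simp add: norm_mult)
  also have "\<dots> \<le> cmod \<rho> + cmod rest"
    by (rule norm_triangle_ineq4)
  also have "cmod \<rho> \<le> ((\<Sum>v<R. (cmod (psi v c w c'))\<^sup>2) + (\<Sum>v<R. (cmod (psi v c' w c))\<^sup>2)) / 2"
    using separable_on_offdiag_le[OF sep, of "(c, w)" "(c', w)" c c'] assms(2-4)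
    unfolding \<rho>_def by (simp add: Re_rhoBC_diag)
  also have "cmod rest \<le> (\<Sum>v\<in>{..<R} - {w}. ((cmod (psi v c w c))\<^sup>2 + (cmod (psi v c' w c'))\<^sup>2) / 2)"
  proof -
    have "cmod (psi v c w c) * cmod (psi v c' w c')
        \<le> ((cmod (psi v c w c))\<^sup>2 + (cmod (psi v c' w c'))\<^sup>2) / 2" for v
      using sum_squares_bound[of "cmod (psi v c w c)" "cmod (psi v c' w c')"] by simp
    then show ?thesis
      unfolding rest_def by (intro order_trans[OF norm_sum] sum_mono) (simp add: norm_mult)
  qed
  finally show ?thesis
    using mismatch_weight_ge_blocks[OF assms(2-5), of psi]
    by (simp add: sum.distrib flip: sum_divide_distrib) argo
qed

lemma sum_diag_amplitude_le_max_add_mismatch_weight: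
  assumes sep: "separable_on ({..<\<kappa>} \<times> {..<R}) {..<\<kappa>} (rhoBC R psi)"
    and "w < R" "cs < \<kappa>" and max: "\<forall>c<\<kappa>. cmod (psi w c w c) \<le> cmod (psi w cs w cs)"
  shows "(\<Sum>c<\<kappa>. (cmod (psi w c w c))\<^sup>2)
    \<le> (cmod (psi w cs w cs))\<^sup>2 + (real \<kappa> - 1) / 2 * mismatch_weight R \<kappa> psi w"
proof -
  have "(cmod (psi w c w c))\<^sup>2 \<le> mismatch_weight R \<kappa> psi w / 2" if "c \<in> {..<\<kappa>} - {cs}" for c
  proof -
    have "(cmod (psi w c w c))\<^sup>2 \<le> cmod (psi w c w c) * cmod (psi w cs w cs)"
      using max that by (simp add: power2_eq_square mult_left_mono)
    also have "\<dots> \<le> mismatch_weight R \<kappa> psi w / 2"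
      using diag_amplitude_mult_le_mismatch_weight[OF sep \<open>w < R\<close>] that \<open>cs < \<kappa>\<close> by auto
    finally show ?thesis .
  qed
  then have "(\<Sum>c\<in>{..<\<kappa>} - {cs}. (cmod (psi w c w c))\<^sup>2)
      \<le> real (card ({..<\<kappa>} - {cs})) * (mismatch_weight R \<kappa> psi w / 2)"
    by (rule sum_bounded_above)
  moreover have "(\<Sum>c<\<kappa>. (cmod (psi w c w c))\<^sup>2)
      = (cmod (psi w cs w cs))\<^sup>2 + (\<Sum>c\<in>{..<\<kappa>} - {cs}. (cmod (psi w c w c))\<^sup>2)"
    using \<open>cs < \<kappa>\<close> by (simp add: sum.remove)
  ultimately show ?thesis
    using \<open>cs < \<kappa>\<close> by (simp add: of_nat_diff)
qed

lemma matchcheck_prob_le_max_diag_weight: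
  assumes "is_state4 R \<kappa> psi" and sep: "separable_on ({..<\<kappa>} \<times> {..<R}) {..<\<kappa>} (rhoBC R psi)"
    and cv: "\<forall>w<R. cv w < \<kappa> \<and> (\<forall>c<\<kappa>. cmod (psi w c w c) \<le> cmod (psi w (cv w) w (cv w)))"
  shows "matchcheck_prob R \<kappa> psi - (real \<kappa> - 1) / 2 * (1 - matchcheck_prob R \<kappa> psi)
    \<le> (\<Sum>w<R. (cmod (psi w (cv w) w (cv w)))\<^sup>2)"
proof -
  have mismatch: "(\<Sum>w<R. mismatch_weight R \<kappa> psi w) = 1 - matchcheck_prob R \<kappa> psi"
    using matchcheck_prob_add_mismatch_weight[OF assms(1)] by simp
  have "matchcheck_prob R \<kappa> psi = (\<Sum>w<R. \<Sum>c<\<kappa>. (cmod (psi w c w c))\<^sup>2)"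
    by (simp add: matchcheck_prob_def)
  also have "\<dots> \<le> (\<Sum>w<R. (cmod (psi w (cv w) w (cv w)))\<^sup>2 + (real \<kappa> - 1) / 2 * mismatch_weight R \<kappa> psi w)"
    using cv by (intro sum_mono sum_diag_amplitude_le_max_add_mismatch_weight[OF sep]) auto
  also have "\<dots> = (\<Sum>w<R. (cmod (psi w (cv w) w (cv w)))\<^sup>2) + (real \<kappa> - 1) / 2 * (1 - matchcheck_prob R \<kappa> psi)"
    by (simp only: sum.distrib sum_distrib_left[symmetric] mismatch)
  finally show ?thesis by simp
qed

definition quasirigid_state :: "(nat \<Rightarrow> nat) \<Rightarrow> (nat \<Rightarrow> complex) \<Rightarrow> nat \<Rightarrow> nat \<Rightarrow> nat \<Rightarrow> nat \<Rightarrow> complex" where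
  "quasirigid_state cv \<alpha> = (\<lambda>v c w d. if c = cv v \<and> w = v \<and> d = cv v then \<alpha> v else 0)"

lemma quasirigid_after_cnot_quasirigid_state:
  "\<forall>v<R. cv v < \<kappa> \<Longrightarrow> quasirigid_after_cnot R \<kappa> (quasirigid_state cv \<alpha>)"
  unfolding quasirigid_after_cnot_def quasirigid_state_def by blast

lemma is_state4_quasirigid_state_iff:
  assumes "\<forall>v<R. cv v < \<kappa>"
  shows "is_state4 R \<kappa> (quasirigid_state cv \<alpha>) \<longleftrightarrow> (\<Sum>v<R. (cmod (\<alpha> v))\<^sup>2) = 1"
proof -
  have "(cmod (quasirigid_state cv \<alpha> v c w d))\<^sup>2
      = (if c = cv v \<and> w = v \<and> d = cv v then (cmod (\<alpha> v))\<^sup>2 else 0)" for v c w d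
    by (simp add: quasirigid_state_def)
  moreover have "(\<Sum>c<\<kappa>. \<Sum>w<R. \<Sum>d<\<kappa>. if c = cv v \<and> w = v \<and> d = cv v then (cmod (\<alpha> v))\<^sup>2 else 0)
      = (cmod (\<alpha> v))\<^sup>2" if "v < R" for v
    using assms that by (intro sum_if_eq_triple) auto
  ultimately show ?thesis
    unfolding is_state4_def by simp
qed

lemma inner4_quasirigid_state:
  assumes "\<forall>v<R. cv v < \<kappa>"
  shows "inner4 R \<kappa> (quasirigid_state cv \<alpha>) psi = (\<Sum>v<R. cnj (\<alpha> v) * psi v (cv v) v (cv v))"
proof -
  have "cnj (quasirigid_state cv \<alpha> v c w d) * psi v c w d
      = (if c = cv v \<and> w = v \<and> d = cv v then cnj (\<alpha> v) * psi v c w d else 0)" for v c w d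
    by (simp add: quasirigid_state_def)
  moreover have "(\<Sum>c<\<kappa>. \<Sum>w<R. \<Sum>d<\<kappa>. if c = cv v \<and> w = v \<and> d = cv v then cnj (\<alpha> v) * psi v c w d else 0)
      = cnj (\<alpha> v) * psi v (cv v) v (cv v)" if "v < R" for v
    using assms that by (intro sum_if_eq_triple) auto
  ultimately show ?thesis
    unfolding inner4_def by simp
qed

lemma exists_quasirigid_state_overlap_ge:
  assumes "R \<ge> 1" "\<forall>v<R. cv v < \<kappa>"
  shows "\<exists>phi. is_state4 R \<kappa> phi \<and> quasirigid_after_cnot R \<kappa> phi \<and>
    (\<Sum>v<R. (cmod (psi v (cv v) v (cv v)))\<^sup>2) \<le> (cmod (inner4 R \<kappa> phi psi))\<^sup>2"
proof -
  obtain \<alpha> where "(\<Sum>v<R. (cmod (\<alpha> v))\<^sup>2) = 1"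
    and "(\<Sum>v<R. (cmod (psi v (cv v) v (cv v)))\<^sup>2) \<le> (cmod (\<Sum>v<R. cnj (\<alpha> v) * psi v (cv v) v (cv v)))\<^sup>2"
    using exists_unit_vector_inner_ge[OF assms(1), of "\<lambda>v. psi v (cv v) v (cv v)"] by blast
  with assms(2) show ?thesis
    by (intro exI[of _ "quasirigid_state cv \<alpha>"] conjI)
      (simp_all only: is_state4_quasirigid_state_iff quasirigid_after_cnot_quasirigid_state inner4_quasirigid_state)
qed

theorem lemma4p4:
  fixes R \<kappa> :: nat and psi :: "nat \<Rightarrow> nat \<Rightarrow> nat \<Rightarrow> nat \<Rightarrow> complex" and \<epsilon> :: real
  assumes "R \<ge> 1" and "\<kappa> \<ge> 1"
    and "is_state4 R \<kappa> psi"
    and "matchcheck_prob R \<kappa> psi = 1 - \<epsilon>"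
    and "separable_on ({..<\<kappa>} \<times> {..<R}) {..<\<kappa>} (rhoBC R psi)"
  shows "\<exists>phi. is_state4 R \<kappa> phi \<and> quasirigid_after_cnot R \<kappa> phi \<and>
           (cmod (inner4 R \<kappa> phi psi))\<^sup>2 \<ge> 1 - (real \<kappa> + 1) * \<epsilon>"
proof -
  have "\<exists>cs<\<kappa>. \<forall>c<\<kappa>. cmod (psi w c w c) \<le> cmod (psi w cs w cs)" for w
    using assms(2) by (intro ex_max_lessThan) simp
  then obtain cv where cv: "\<forall>w<R. cv w < \<kappa> \<and> (\<forall>c<\<kappa>. cmod (psi w c w c) \<le> cmod (psi w (cv w) w (cv w)))"
    by metis
  have "\<epsilon> \<ge> 0"
    using matchcheck_prob_le_one[OF assms(3)] assms(4) by simp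
  then have "(real \<kappa> - 1) / 2 * \<epsilon> \<le> real \<kappa> * \<epsilon>"
    by (intro mult_right_mono) simp_all
  moreover have "1 - \<epsilon> - (real \<kappa> - 1) / 2 * \<epsilon> \<le> (\<Sum>w<R. (cmod (psi w (cv w) w (cv w)))\<^sup>2)"
    using matchcheck_prob_le_max_diag_weight[OF assms(3,5) cv] assms(4) by simp
  ultimately have "1 - (real \<kappa> + 1) * \<epsilon> \<le> (\<Sum>w<R. (cmod (psi w (cv w) w (cv w)))\<^sup>2)"
    unfolding distrib_right by linarith
  moreover obtain phi where "is_state4 R \<kappa> phi" "quasirigid_after_cnot R \<kappa> phi"
    "(\<Sum>w<R. (cmod (psi w (cv w) w (cv w)))\<^sup>2) \<le> (cmod (inner4 R \<kappa> phi psi))\<^sup>2"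
    using exists_quasirigid_state_overlap_ge[OF assms(1), of cv \<kappa> psi] cv by blast
  ultimately show ?thesis
    by (meson order_trans)
qed

end
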